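(* Let $\vartheta$ be a primitive semi-compatible random substitution with PF eigenvalue $\lambda$ and normalised right PF eigenvector $\bm R$, let $K=\max_i\ell_{1,i}$, $I_N=\vartheta(\mathcal L)\cap\mathcal L_N$, and for $\varepsilon>0$ put $\lambda^\pm_\varepsilon=\lambda\pm\varepsilon nK$. For every $\varepsilon>0$ with $\lambda>\varepsilon nK$ there is $N_0$ such that for all $N\geqslant N_0$, \[ \#I_N\;\leqslant\;N\Bigl(\frac{1}{\lambda^-_\varepsilon}-\frac{1}{\lambda^+_\varepsilon}\Bigr)\bigl(\#\mathcal L_{\lfloor N/\lambda^-_\varepsilon\rfloor}\bigr)\prod_{i=1}^n(\#\vartheta(a_i))^{(R_i+\varepsilon)N/\lambda^-_\varepsilon}. \]
   Context: Let $\mathcal A=\{a_1,\dots,a_n\}$ be a finite alphabet ($n=\#\mathcal A$), $\mathcal A^+$ the finite non-empty words over $\mathcal A$. A random substitution is a map $\vartheta$ from $\mathcal A$ to finite non-empty subsets of $\mathcal A^+$, extended to words by $\vartheta(u_1\cdots u_m)=\{w_1\cdots w_m: w_k\in\vartheta(u_k)\}$ and to sets of words by unions. $|u|$ is the length and $|u|_a$ the number of occurrences of letter $a$ in $u$; $\Phi(u)=(|u|_{a_1},\dots,|u|_{a_n})^\intercal$. $\vartheta$ is semi-compatible if for each $a$ all words in $\vartheta(a)$ have the same $\Phi$; then all words in $\vartheta(a_i)$ have common length $\ell_{1,i}$. Substitution matrix: $M_{ij}=|u|_{a_i}$, $u\in\vartheta(a_j)$; primitive means $M$ primitive, with Perron–Frobenius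 eigenvalue $\lambda$ and right PF eigenvector $\bm R=(R_1,\dots,R_n)^\intercal$, $\|\bm R\|_1=1$. The language $\mathcal L$ is the set of all subwords of words in $\vartheta^m(a)$, $a\in\mathcal A$, $m\in\mathbb N$, and $\mathcal L_\ell=\{v\in\mathcal L:|v|=\ell\}$. *)

theory Defs
  imports Complex_Main
begin

definition random_subst :: "('a \<Rightarrow> 'a list set) \<Rightarrow> bool" where
  "random_subst \<theta> \<longleftrightarrow> (\<forall>a. finite (\<theta> a) \<and> \<theta> a \<noteq> {} \<and> [] \<notin> \<theta> a)"

definition semi_compatible :: "('a \<Rightarrow> 'a list set) \<Rightarrow> bool" where
  "semi_compatible \<theta> \<longleftrightarrow>
     (\<forall>a u v b. u \<in> \<theta> a \<longrightarrow> v \<in> \<theta> a \<longrightarrow> count_list u b = count_list v b)"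

definition subst_word :: "('a \<Rightarrow> 'a list set) \<Rightarrow> 'a list \<Rightarrow> 'a list set" where
  "subst_word \<theta> u = concat ` listset (map \<theta> u)"

definition subst_set :: "('a \<Rightarrow> 'a list set) \<Rightarrow> 'a list set \<Rightarrow> 'a list set" where
  "subst_set \<theta> W = (\<Union>w\<in>W. subst_word \<theta> w)"

fun subst_pow :: "('a \<Rightarrow> 'a list set) \<Rightarrow> nat \<Rightarrow> 'a \<Rightarrow> 'a list set" where
  "subst_pow \<theta> 0 a = {[a]}"
| "subst_pow \<theta> (Suc m) a = subst_set \<theta> (subst_pow \<theta> m a)"

definition subst_matrix :: "('a \<Rightarrow> 'a list set) \<Rightarrow> 'a \<Rightarrow> 'a \<Rightarrow> nat" where
  "subst_matrix \<theta> i j = count_list (SOME u. u \<in> \<theta> j) i"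

definition subst_len :: "('a \<Rightarrow> 'a list set) \<Rightarrow> 'a \<Rightarrow> nat" where
  "subst_len \<theta> a = length (SOME u. u \<in> \<theta> a)"

fun mat_pow :: "('a::finite \<Rightarrow> 'a \<Rightarrow> nat) \<Rightarrow> nat \<Rightarrow> 'a \<Rightarrow> 'a \<Rightarrow> nat" where
  "mat_pow M 0 i j = (if i = j then 1 else 0)"
| "mat_pow M (Suc k) i j = (\<Sum>l\<in>UNIV. mat_pow M k i l * M l j)"

definition primitive_mat :: "('a::finite \<Rightarrow> 'a \<Rightarrow> nat) \<Rightarrow> bool" where
  "primitive_mat M \<longleftrightarrow> (\<exists>k>0. \<forall>i j. mat_pow M k i j > 0)"

definition subst_lang :: "('a \<Rightarrow> 'a list set) \<Rightarrow> 'a list set" where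
  "subst_lang \<theta> = {v. v \<noteq> [] \<and> (\<exists>a m w p s. w \<in> subst_pow \<theta> m a \<and> w = p @ v @ s)}"

definition lang_len :: "('a \<Rightarrow> 'a list set) \<Rightarrow> nat \<Rightarrow> 'a list set" where
  "lang_len \<theta> l = {v \<in> subst_lang \<theta>. length v = l}"

end

theory Submission
  imports Defs
begin

(* Some power M^k is positive. In the ratios x_i / R_i, multiplying a nonnegative vector by
   M^k shrinks the oscillation (max - min) by the factor mu - 1 and raises the minimum by the
   factor mu = lam^k; applied to the letter-count vectors of level words (the columns of
   M^(nk)) this shows that the words of theta^(nk)(a) have letter frequencies close to R.
   A long legal word is a concatenation of such level words up to two ends of bounded
   length, so its frequencies are close to R as well. Hence a legal u with an image of
   length N in theta(u) has length between N / lam^+ and N / lam^- (with eps / 2 instead of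
   eps); there are at most N (1 / lam^- - 1 / lam^+) such lengths, at most
   #L_(N / lam^-) legal words of each length because the language is right-extendable
   when K >= 2 (for K = 1 all legal words are letters), and each u has at most
   prod_i #theta(a_i)^(|u|_(a_i)) images. *)

lemma in_listset_iff: "xs \<in> listset As \<longleftrightarrow> list_all2 (\<in>) xs As"
proof (induction As arbitrary: xs)
  case Nil then show ?case by simp
next
  case (Cons A As) then show ?case
    by (cases xs) (auto simp: set_Cons_def)
qed

lemma mem_subst_word_iff:
  "v \<in> subst_word \<theta> u \<longleftrightarrow> (\<exists>vs. list_all2 (\<lambda>v c. v \<in> \<theta> c) vs u \<and> v = concat vs)"
  unfolding subst_word_def by (auto simp: in_listset_iff list_all2_map2)

lemma subst_word_Nil [simp]: "subst_word \<theta> [] = {[]}"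
  by (simp add: subst_word_def)

lemma subst_word_singleton [simp]: "subst_word \<theta> [c] = \<theta> c"
proof (rule set_eqI)
  show "v \<in> subst_word \<theta> [c] \<longleftrightarrow> v \<in> \<theta> c" for v
    unfolding mem_subst_word_iff by (auto simp: list_all2_Cons2)
qed

lemma mem_subst_word_append_iff:
  "v \<in> subst_word \<theta> (u\<^sub>1 @ u\<^sub>2) \<longleftrightarrow>
     (\<exists>v\<^sub>1 v\<^sub>2. v = v\<^sub>1 @ v\<^sub>2 \<and> v\<^sub>1 \<in> subst_word \<theta> u\<^sub>1 \<and> v\<^sub>2 \<in> subst_word \<theta> u\<^sub>2)"
proof
  assume "v \<in> subst_word \<theta> (u\<^sub>1 @ u\<^sub>2)"
  then obtain vs\<^sub>1 vs\<^sub>2 where "v = concat vs\<^sub>1 @ concat vs\<^sub>2"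
    "list_all2 (\<lambda>v c. v \<in> \<theta> c) vs\<^sub>1 u\<^sub>1" "list_all2 (\<lambda>v c. v \<in> \<theta> c) vs\<^sub>2 u\<^sub>2"
    unfolding mem_subst_word_iff list_all2_append2 by auto
  then show "\<exists>v\<^sub>1 v\<^sub>2. v = v\<^sub>1 @ v\<^sub>2 \<and> v\<^sub>1 \<in> subst_word \<theta> u\<^sub>1 \<and> v\<^sub>2 \<in> subst_word \<theta> u\<^sub>2"
    unfolding mem_subst_word_iff by blast
next
  assume "\<exists>v\<^sub>1 v\<^sub>2. v = v\<^sub>1 @ v\<^sub>2 \<and> v\<^sub>1 \<in> subst_word \<theta> u\<^sub>1 \<and> v\<^sub>2 \<in> subst_word \<theta> u\<^sub>2"
  then obtain vs\<^sub>1 vs\<^sub>2 where "v = concat vs\<^sub>1 @ concat vs\<^sub>2"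
    "list_all2 (\<lambda>v c. v \<in> \<theta> c) vs\<^sub>1 u\<^sub>1" "list_all2 (\<lambda>v c. v \<in> \<theta> c) vs\<^sub>2 u\<^sub>2"
    unfolding mem_subst_word_iff by blast
  then show "v \<in> subst_word \<theta> (u\<^sub>1 @ u\<^sub>2)"
    unfolding mem_subst_word_iff by (metis concat_append list_all2_appendI)
qed

lemma mem_subst_word_Cons_iff:
  "v \<in> subst_word \<theta> (c # u) \<longleftrightarrow> (\<exists>v\<^sub>1 v\<^sub>2. v = v\<^sub>1 @ v\<^sub>2 \<and> v\<^sub>1 \<in> \<theta> c \<and> v\<^sub>2 \<in> subst_word \<theta> u)"
  using mem_subst_word_append_iff[of v \<theta> "[c]" u] by simp

lemma subst_word_letters: "subst_word (\<lambda>c. {[c]}) u = {u}"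
proof (induction u)
  case Nil then show ?case by simp
next
  case (Cons c u)
  have "v \<in> subst_word (\<lambda>c. {[c]}) (c # u) \<longleftrightarrow> v = c # u" for v
    unfolding mem_subst_word_Cons_iff Cons.IH by simp
  then show ?case by blast
qed

lemma subst_set_subst_word:
  "subst_set \<theta> (subst_word \<phi> u) = subst_word (\<lambda>c. subst_set \<theta> (\<phi> c)) u"
proof (induction u)
  case Nil then show ?case by (simp add: subst_set_def)
next
  case (Cons c u)
  show ?case
  proof (intro equalityI subsetI)
    fix v assume "v \<in> subst_set \<theta> (subst_word \<phi> (c # u))"
    then obtain x where "x \<in> subst_word \<phi> (c # u)" "v \<in> subst_word \<theta> x"
      unfolding subst_set_def by blast
    then obtain x\<^sub>1 x\<^sub>2 where x: "x\<^sub>1 \<in> \<phi> c" "x\<^sub>2 \<in> subst_word \<phi> u" "v \<in> subst_word \<theta> (x\<^sub>1 @ x\<^sub>2)"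
      unfolding mem_subst_word_Cons_iff by blast
    then obtain v\<^sub>1 v\<^sub>2 where v: "v = v\<^sub>1 @ v\<^sub>2" "v\<^sub>1 \<in> subst_word \<theta> x\<^sub>1" "v\<^sub>2 \<in> subst_word \<theta> x\<^sub>2"
      unfolding mem_subst_word_append_iff by blast
    have "v\<^sub>1 \<in> subst_set \<theta> (\<phi> c)"
      using x(1) v(2) unfolding subst_set_def by blast
    moreover have "v\<^sub>2 \<in> subst_set \<theta> (subst_word \<phi> u)"
      using x(2) v(3) unfolding subst_set_def by blast
    ultimately show "v \<in> subst_word (\<lambda>c. subst_set \<theta> (\<phi> c)) (c # u)"
      unfolding mem_subst_word_Cons_iff v(1) Cons.IH[symmetric] by blast
  next
    fix v assume "v \<in> subst_word (\<lambda>c. subst_set \<theta> (\<phi> c)) (c # u)"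
    then obtain v\<^sub>1 v\<^sub>2 where v: "v = v\<^sub>1 @ v\<^sub>2" "v\<^sub>1 \<in> subst_set \<theta> (\<phi> c)"
      "v\<^sub>2 \<in> subst_set \<theta> (subst_word \<phi> u)"
      unfolding mem_subst_word_Cons_iff Cons.IH by blast
    then obtain x\<^sub>1 x\<^sub>2 where "x\<^sub>1 \<in> \<phi> c" "v\<^sub>1 \<in> subst_word \<theta> x\<^sub>1"
      "x\<^sub>2 \<in> subst_word \<phi> u" "v\<^sub>2 \<in> subst_word \<theta> x\<^sub>2"
      unfolding subst_set_def by blast
    with v(1) have "x\<^sub>1 @ x\<^sub>2 \<in> subst_word \<phi> (c # u)" "v \<in> subst_word \<theta> (x\<^sub>1 @ x\<^sub>2)"
      unfolding mem_subst_word_Cons_iff mem_subst_word_append_iff by blast+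
    then show "v \<in> subst_set \<theta> (subst_word \<phi> (c # u))"
      unfolding subst_set_def by blast
  qed
qed

lemma subst_set_subst_set:
  "subst_set \<theta> (subst_set \<phi> W) = subst_set (\<lambda>c. subst_set \<theta> (\<phi> c)) W"
  by (simp add: subst_set_def subst_set_subst_word[unfolded subst_set_def])

lemma subst_pow_add:
  "subst_pow \<theta> (k + m) a = subst_set (subst_pow \<theta> m) (subst_pow \<theta> k a)"
proof (induction m)
  case 0 then show ?case by (simp add: subst_set_def subst_word_letters)
next
  case (Suc m)
  have "subst_pow \<theta> (k + Suc m) a = subst_set \<theta> (subst_set (subst_pow \<theta> m) (subst_pow \<theta> k a))"
    by (simp add: Suc.IH)
  also have "\<dots> = subst_set (\<lambda>c. subst_set \<theta> (subst_pow \<theta> m c)) (subst_pow \<theta> k a)"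
    by (rule subst_set_subst_set)
  also have "(\<lambda>c. subst_set \<theta> (subst_pow \<theta> m c)) = subst_pow \<theta> (Suc m)"
    by (rule ext) simp
  finally show ?case .
qed

lemma mem_subst_pow_Suc_iff:
  "w \<in> subst_pow \<theta> (Suc m) a \<longleftrightarrow> (\<exists>w'. w' \<in> subst_pow \<theta> m a \<and> w \<in> subst_word \<theta> w')"
  by (auto simp: subst_set_def)

lemma mem_subst_pow_add_iff:
  "w \<in> subst_pow \<theta> (k + m) a \<longleftrightarrow>
     (\<exists>w' vs. w' \<in> subst_pow \<theta> k a \<and> list_all2 (\<lambda>v c. v \<in> subst_pow \<theta> m c) vs w' \<and> w = concat vs)"
  by (auto simp: subst_pow_add subst_set_def mem_subst_word_iff)

lemma mat_pow_add:
  "mat_pow M (k + m) i j = (\<Sum>l\<in>UNIV. mat_pow M k i l * mat_pow M m l j)"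
proof (induction m arbitrary: j)
  case 0 then show ?case by (simp add: if_distrib[where f="\<lambda>x. _ * x"] cong: if_cong)
next
  case (Suc m)
  have "mat_pow M (k + Suc m) i j = (\<Sum>l'\<in>UNIV. \<Sum>l\<in>UNIV. mat_pow M k i l * mat_pow M m l l' * M l' j)"
    by (simp add: Suc.IH sum_distrib_right)
  also have "\<dots> = (\<Sum>l\<in>UNIV. mat_pow M k i l * mat_pow M (Suc m) l j)"
    by (subst sum.swap) (simp add: sum_distrib_left mult.assoc)
  finally show ?case .
qed

lemma mat_pow_1: "mat_pow M 1 i j = M i j"
  by (simp add: if_distrib[where f="\<lambda>x. x * _"] cong: if_cong)

lemma mat_pow_Suc_left: "mat_pow M (Suc m) i j = (\<Sum>l\<in>UNIV. M i l * mat_pow M m l j)"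
  using mat_pow_add[of M 1 m i j] unfolding mat_pow_1 by simp

lemma mat_pow_eigenvector:
  assumes "\<And>i. (\<Sum>j\<in>UNIV. real (M i j) * R j) = \<mu> * R i"
  shows "(\<Sum>j\<in>UNIV. real (mat_pow M k i j) * R j) = \<mu> ^ k * R i"
proof (induction k arbitrary: i)
  case 0 then show ?case
    by (simp add: if_distrib[where f=real] if_distrib[where f="\<lambda>x. x * _"] cong: if_cong)
next
  case (Suc k)
  have "(\<Sum>j\<in>UNIV. real (mat_pow M (Suc k) i j) * R j)
      = (\<Sum>l\<in>UNIV. real (mat_pow M k i l) * (\<Sum>j\<in>UNIV. real (M l j) * R j))"
    by (simp add: sum_distrib_left sum_distrib_right mult.assoc) (rule sum.swap)
  also have "\<dots> = \<mu> * (\<Sum>l\<in>UNIV. real (mat_pow M k i l) * R l)"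
    by (simp add: assms sum_distrib_left mult.left_commute)
  finally show ?case by (simp add: Suc.IH)
qed

section \<open>Semi-compatible random substitutions\<close>

lemma prod_list_map_eq_prod_count:
  "prod_list (map f xs) = (\<Prod>x\<in>(UNIV::'a::finite set). f x ^ count_list xs x)"
proof (induction xs)
  case Nil then show ?case by simp
next
  case (Cons c xs)
  have "(\<Prod>x\<in>UNIV. f x ^ count_list (c # xs) x) = (\<Prod>x\<in>UNIV. (if x = c then f x else 1) * f x ^ count_list xs x)"
    by (rule prod.cong) auto
  also have "\<dots> = f c * (\<Prod>x\<in>UNIV. f x ^ count_list xs x)"
    by (simp add: prod.distrib prod.delta)
  finally show ?case using Cons by simp
qed

lemma length_eq_sum_count_list: "length (xs :: 'a::finite list) = (\<Sum>i\<in>UNIV. count_list xs i)"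
  using sum_count_set[of xs UNIV] by simp

locale semi_compatible_subst =
  fixes th :: "'a::finite \<Rightarrow> 'a list set"
  assumes rs: "random_subst th" and sc: "semi_compatible th"
begin

abbreviation "M \<equiv> subst_matrix th"
abbreviation "ell \<equiv> subst_len th"
abbreviation "K \<equiv> Max (range ell)"
abbreviation "nK \<equiv> real (card (UNIV :: 'a set)) * real K"

lemma finite_subst [simp]: "finite (th a)"
  and subst_nonempty: "th a \<noteq> {}"
  and Nil_notin_subst: "[] \<notin> th a"
  using rs by (auto simp: random_subst_def)

lemma some_mem_subst: "(SOME u. u \<in> th c) \<in> th c"
  using subst_nonempty by (simp add: some_in_eq)

lemma count_list_subst_letter: "u \<in> th c \<Longrightarrow> count_list u i = M i c"
  using sc some_mem_subst unfolding semi_compatible_def subst_matrix_def by blast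

lemma length_subst_letter: "u \<in> th c \<Longrightarrow> length u = ell c"
  using count_list_subst_letter[of u c] count_list_subst_letter[OF some_mem_subst]
  by (simp add: subst_len_def length_eq_sum_count_list)

lemma subst_len_pos: "0 < ell c"
  using length_subst_letter[OF some_mem_subst] Nil_notin_subst some_mem_subst
  by (metis length_greater_0_conv)

lemma subst_len_le_K: "ell c \<le> K"
  by (simp add: Max_ge)

lemma K_pos: "0 < K"
  using subst_len_pos subst_len_le_K by (rule less_le_trans)

lemma nK_pos: "0 < nK"
  using K_pos by (simp add: card_gt_0_iff)

lemma subst_len_eq_sum: "ell c = (\<Sum>i\<in>UNIV. M i c)"
  using length_subst_letter[OF some_mem_subst] count_list_subst_letter[OF some_mem_subst]
  by (simp add: length_eq_sum_count_list)

lemma count_list_subst_word: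
  assumes "v \<in> subst_word th u"
  shows "count_list v i = (\<Sum>j\<in>UNIV. count_list u j * M i j)"
proof -
  have "count_list v i = sum_list (map (\<lambda>c. M i c) u)"
    using assms
    by (induction u arbitrary: v) (auto simp: mem_subst_word_Cons_iff count_list_subst_letter)
  then show ?thesis by (simp add: sum_list_map_eq_sum_count2[of u UNIV])
qed

lemma length_subst_word:
  assumes "v \<in> subst_word th u"
  shows "length v = (\<Sum>j\<in>UNIV. count_list u j * ell j)"
proof -
  have "length v = sum_list (map ell u)"
    using assms
    by (induction u arbitrary: v) (auto simp: mem_subst_word_Cons_iff length_subst_letter)
  then show ?thesis by (simp add: sum_list_map_eq_sum_count2[of u UNIV])
qed

lemma length_le_length_subst_word: "v \<in> subst_word th u \<Longrightarrow> length u \<le> length v"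
  unfolding length_subst_word length_eq_sum_count_list[of u]
  by (intro sum_mono) (simp add: Suc_leI subst_len_pos)

lemma length_subst_word_le: "v \<in> subst_word th u \<Longrightarrow> length v \<le> K * length u"
  unfolding length_subst_word length_eq_sum_count_list[of u] sum_distrib_left
  by (intro sum_mono) (simp add: subst_len_le_K)

lemma card_subst_word_le:
  "finite (subst_word th u) \<and> card (subst_word th u) \<le> (\<Prod>i\<in>UNIV. card (th i) ^ count_list u i)"
proof -
  have "finite (subst_word th u) \<and> card (subst_word th u) \<le> prod_list (map (\<lambda>c. card (th c)) u)"
  proof (induction u)
    case Nil then show ?case by simp
  next
    case (Cons c u)
    have eq: "subst_word th (c # u) = (\<lambda>(x, y). x @ y) ` (th c \<times> subst_word th u)"
    proof (rule set_eqI)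
      show "v \<in> subst_word th (c # u) \<longleftrightarrow> v \<in> (\<lambda>(x, y). x @ y) ` (th c \<times> subst_word th u)" for v
        unfolding mem_subst_word_Cons_iff by (auto simp: image_iff)
    qed
    have "card (subst_word th (c # u)) \<le> card (th c \<times> subst_word th u)"
      unfolding eq using Cons.IH by (intro card_image_le) simp
    also have "\<dots> = card (th c) * card (subst_word th u)"
      by (rule card_cartesian_product)
    also have "\<dots> \<le> card (th c) * prod_list (map (\<lambda>c. card (th c)) u)"
      using Cons.IH by simp
    finally show ?case using Cons.IH eq by simp
  qed
  then show ?thesis by (simp add: prod_list_map_eq_prod_count)
qed

lemma subst_word_nonempty: "subst_word th u \<noteq> {}"
proof (induction u)
  case Nil then show ?case by simp
next
  case (Cons c u)
  obtain x y where "x \<in> th c" "y \<in> subst_word th u"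
    using subst_nonempty[of c] Cons.IH by blast
  then have "x @ y \<in> subst_word th (c # u)"
    unfolding mem_subst_word_Cons_iff by blast
  then show ?case by blast
qed

lemma subst_pow_nonempty: "subst_pow th m a \<noteq> {}"
  by (induction m) (auto simp: subst_set_def subst_word_nonempty)

lemma subst_pow_not_Nil: "w \<in> subst_pow th m a \<Longrightarrow> w \<noteq> []"
proof (induction m arbitrary: w)
  case 0 then show ?case by simp
next
  case (Suc m)
  obtain w' where "w' \<in> subst_pow th m a" "w \<in> subst_word th w'"
    using Suc.prems unfolding mem_subst_pow_Suc_iff by blast
  then have "w' \<noteq> []" "length w' \<le> length w"
    using Suc.IH length_le_length_subst_word by blast+
  then show ?case by auto
qed

definition level_word :: "nat \<Rightarrow> 'a \<Rightarrow> 'a list" where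
  "level_word k c = (SOME v. v \<in> subst_pow th k c)"

lemma level_word_mem: "level_word k c \<in> subst_pow th k c"
  unfolding level_word_def using subst_pow_nonempty by (simp add: some_in_eq)

lemma list_all2_level_word: "list_all2 (\<lambda>v c. v \<in> subst_pow th k c) (map (level_word k) cs) cs"
  by (simp add: list_all2_conv_all_nth level_word_mem)

lemma length_subst_pow_le: "w \<in> subst_pow th m a \<Longrightarrow> length w \<le> K ^ m"
proof (induction m arbitrary: w)
  case 0 then show ?case by simp
next
  case (Suc m)
  obtain w' where "w' \<in> subst_pow th m a" "w \<in> subst_word th w'"
    using Suc.prems unfolding mem_subst_pow_Suc_iff by blast
  then have "length w \<le> K * length w'" "length w' \<le> K ^ m"
    using Suc.IH length_subst_word_le by blast+
  then show ?case
    by (metis dual_order.trans mult_le_mono2 power_Suc)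
qed

lemma count_list_subst_pow: "w \<in> subst_pow th m a \<Longrightarrow> count_list w i = mat_pow M m i a"
proof (induction m arbitrary: w i)
  case 0 then show ?case by simp
next
  case (Suc m)
  obtain w' where "w' \<in> subst_pow th m a" "w \<in> subst_word th w'"
    using Suc.prems unfolding mem_subst_pow_Suc_iff by blast
  then show ?case
    unfolding mat_pow_Suc_left by (simp add: count_list_subst_word Suc.IH mult.commute)
qed

lemma length_subst_pow: "w \<in> subst_pow th m a \<Longrightarrow> length w = (\<Sum>i\<in>UNIV. mat_pow M m i a)"
  by (simp add: length_eq_sum_count_list count_list_subst_pow)

end

section \<open>Contraction of ratios under a positive matrix\<close>

definition ratio_max :: "('a::finite \<Rightarrow> real) \<Rightarrow> ('a \<Rightarrow> real) \<Rightarrow> real" where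
  "ratio_max R x = Max (range (\<lambda>i. x i / R i))"

definition ratio_min :: "('a::finite \<Rightarrow> real) \<Rightarrow> ('a \<Rightarrow> real) \<Rightarrow> real" where
  "ratio_min R x = Min (range (\<lambda>i. x i / R i))"

lemma le_ratio_max: "x i / R i \<le> ratio_max R x"
  unfolding ratio_max_def by (rule Max_ge) auto

lemma ratio_min_le: "ratio_min R x \<le> x i / R i"
  unfolding ratio_min_def by (rule Min_le) auto

lemma ratio_max_le_iff: "ratio_max R x \<le> t \<longleftrightarrow> (\<forall>i. x i / R i \<le> t)"
  unfolding ratio_max_def by (subst Max_le_iff) auto

lemma le_ratio_min_iff: "t \<le> ratio_min R x \<longleftrightarrow> (\<forall>i. t \<le> x i / R i)"
  unfolding ratio_min_def by (subst Min_ge_iff) auto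

lemma ratio_max_attained: obtains i where "ratio_max R x = x i / R i"
proof -
  have "ratio_max R x \<in> range (\<lambda>i. x i / R i)"
    unfolding ratio_max_def by (rule Max_in) auto
  then show ?thesis using that by blast
qed

lemma ratio_min_attained: obtains i where "ratio_min R x = x i / R i"
proof -
  have "ratio_min R x \<in> range (\<lambda>i. x i / R i)"
    unfolding ratio_min_def by (rule Min_in) auto
  then show ?thesis using that by blast
qed

locale positive_prob_vector =
  fixes R :: "'a::finite \<Rightarrow> real"
  assumes R_pos: "\<And>i. 0 < R i" and R_sum: "(\<Sum>i\<in>UNIV. R i) = 1"
begin

lemma R_le_1: "R i \<le> 1"
  using member_le_sum[of i UNIV R] R_pos R_sum by (simp add: less_imp_le)

lemma ratio_min_nonneg: "(\<And>i. 0 \<le> x i) \<Longrightarrow> 0 \<le> ratio_min R x"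
  unfolding le_ratio_min_iff using R_pos by (simp add: less_imp_le)

lemma sum_eq_sum_ratio: "(\<Sum>j\<in>UNIV. x j) = (\<Sum>j\<in>UNIV. R j * (x j / R j))"
  using R_pos by (simp add: less_imp_neq[symmetric])

lemma ratio_min_le_sum: "ratio_min R x \<le> (\<Sum>j\<in>UNIV. x j)"
proof -
  have "ratio_min R x = (\<Sum>j\<in>UNIV. R j * ratio_min R x)"
    by (simp add: R_sum flip: sum_distrib_right)
  also have "\<dots> \<le> (\<Sum>j\<in>UNIV. R j * (x j / R j))"
    by (intro sum_mono mult_left_mono ratio_min_le) (simp add: R_pos less_imp_le)
  finally show ?thesis using sum_eq_sum_ratio[of x] by linarith
qed

lemma sum_le_ratio_max: "(\<Sum>j\<in>UNIV. x j) \<le> ratio_max R x"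
proof -
  have "(\<Sum>j\<in>UNIV. R j * (x j / R j)) \<le> (\<Sum>j\<in>UNIV. R j * ratio_max R x)"
    by (intro sum_mono mult_left_mono le_ratio_max) (simp add: R_pos less_imp_le)
  also have "\<dots> = ratio_max R x"
    by (simp add: R_sum flip: sum_distrib_right)
  finally show ?thesis using sum_eq_sum_ratio[of x] by linarith
qed

lemma abs_component_deviation_le:
  "\<bar>x i - R i * (\<Sum>j\<in>UNIV. x j)\<bar> \<le> ratio_max R x - ratio_min R x"
proof -
  have "\<bar>x i / R i - (\<Sum>j\<in>UNIV. x j)\<bar> \<le> ratio_max R x - ratio_min R x"
    using le_ratio_max[of x i R] ratio_min_le[of R x i] ratio_min_le_sum[of x] sum_le_ratio_max[of x]
    by linarith
  moreover have "x i - R i * (\<Sum>j\<in>UNIV. x j) = R i * (x i / R i - (\<Sum>j\<in>UNIV. x j))"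
    using R_pos[of i] by (simp add: field_simps)
  moreover have "R i * \<bar>x i / R i - (\<Sum>j\<in>UNIV. x j)\<bar> \<le> \<bar>x i / R i - (\<Sum>j\<in>UNIV. x j)\<bar>"
    using R_pos[of i] R_le_1[of i] by (intro mult_left_le_one_le) auto
  ultimately show ?thesis
    using R_pos[of i] by (simp add: abs_mult)
qed

lemma ratio_bounds_mult:
  fixes A :: "'a \<Rightarrow> 'a \<Rightarrow> real"
  assumes c: "0 \<le> c" "\<And>i j. c \<le> A i j"
    and eig: "\<And>i. (\<Sum>j\<in>UNIV. A i j * R j) = \<mu> * R i"
  shows "(\<mu> - c) * ratio_min R x \<le> (\<Sum>j\<in>UNIV. A i j * x j) / R i - c * (\<Sum>j\<in>UNIV. x j)"
    and "(\<Sum>j\<in>UNIV. A i j * x j) / R i - c * (\<Sum>j\<in>UNIV. x j) \<le> (\<mu> - c) * ratio_max R x"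
proof -
  (* (A x)_i / R_i - c * sum x is a combination of the ratios x_j / R_j with the
     nonnegative weights w_j, whose total is mu - c. *)
  define w where "w j = A i j * R j / R i - c * R j" for j
  have w_nonneg: "0 \<le> w j" for j
  proof -
    have "c * R j \<le> A i j * R j"
      using c R_pos[of j] by (simp add: mult_right_mono)
    also have "\<dots> \<le> A i j * R j / R i"
      using c R_pos[of i] R_pos[of j] R_le_1[of i]
      by (simp add: le_divide_eq mult_left_le order_trans[OF c(1) c(2)])
    finally show ?thesis unfolding w_def by simp
  qed
  have w_sum: "(\<Sum>j\<in>UNIV. w j) = \<mu> - c"
    using R_pos[of i] by (simp add: w_def sum_subtractf R_sum eig flip: sum_divide_distrib sum_distrib_left)
  have "(\<Sum>j\<in>UNIV. w j * (x j / R j)) = (\<Sum>j\<in>UNIV. A i j * x j / R i - c * x j)"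
    using R_pos by (intro sum.cong) (simp_all add: w_def field_simps less_imp_neq[symmetric])
  then have w_avg: "(\<Sum>j\<in>UNIV. A i j * x j) / R i - c * (\<Sum>j\<in>UNIV. x j) = (\<Sum>j\<in>UNIV. w j * (x j / R j))"
    by (simp add: sum_subtractf sum_divide_distrib sum_distrib_left)
  have "(\<mu> - c) * ratio_min R x = (\<Sum>j\<in>UNIV. w j * ratio_min R x)"
    by (simp add: w_sum flip: sum_distrib_right)
  also have "\<dots> \<le> (\<Sum>j\<in>UNIV. w j * (x j / R j))"
    by (intro sum_mono mult_left_mono ratio_min_le w_nonneg)
  finally show "(\<mu> - c) * ratio_min R x \<le> (\<Sum>j\<in>UNIV. A i j * x j) / R i - c * (\<Sum>j\<in>UNIV. x j)"
    by (simp add: w_avg)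
  have "(\<Sum>j\<in>UNIV. w j * (x j / R j)) \<le> (\<Sum>j\<in>UNIV. w j * ratio_max R x)"
    by (intro sum_mono mult_left_mono le_ratio_max w_nonneg)
  also have "\<dots> = (\<mu> - c) * ratio_max R x"
    by (simp add: w_sum flip: sum_distrib_right)
  finally show "(\<Sum>j\<in>UNIV. A i j * x j) / R i - c * (\<Sum>j\<in>UNIV. x j) \<le> (\<mu> - c) * ratio_max R x"
    by (simp add: w_avg)
qed

lemma le_eigenvalue:
  fixes A :: "'a \<Rightarrow> 'a \<Rightarrow> real"
  assumes c: "0 \<le> c" "\<And>i j. c \<le> A i j"
    and eig: "\<And>i. (\<Sum>j\<in>UNIV. A i j * R j) = \<mu> * R i"
  shows "c \<le> \<mu>"
proof -
  fix i
  have "c = (\<Sum>j\<in>UNIV. c * R j)"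
    by (simp add: R_sum flip: sum_distrib_left)
  also have "\<dots> \<le> \<mu> * R i"
    unfolding eig[symmetric] using c R_pos by (intro sum_mono mult_right_mono) (auto simp: less_imp_le)
  finally have c_le: "c \<le> \<mu> * R i" .
  have "0 \<le> \<mu>"
  proof (rule ccontr)
    assume "\<not> 0 \<le> \<mu>"
    then have "\<mu> * R i < 0" using R_pos[of i] by (simp add: mult_neg_pos)
    with c(1) c_le show False by linarith
  qed
  then have "\<mu> * R i \<le> \<mu>" using R_le_1[of i] by (simp add: mult_left_le)
  with c_le show ?thesis by linarith
qed

lemma oscillation_mult_le:
  fixes A :: "'a \<Rightarrow> 'a \<Rightarrow> real"
  assumes "0 \<le> c" "\<And>i j. c \<le> A i j"
    and "\<And>i. (\<Sum>j\<in>UNIV. A i j * R j) = \<mu> * R i"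
  shows "ratio_max R (\<lambda>i. \<Sum>j\<in>UNIV. A i j * x j) - ratio_min R (\<lambda>i. \<Sum>j\<in>UNIV. A i j * x j)
    \<le> (\<mu> - c) * (ratio_max R x - ratio_min R x)"
proof -
  obtain i where "ratio_max R (\<lambda>i. \<Sum>j\<in>UNIV. A i j * x j) = (\<Sum>j\<in>UNIV. A i j * x j) / R i"
    by (rule ratio_max_attained)
  moreover obtain i' where "ratio_min R (\<lambda>i. \<Sum>j\<in>UNIV. A i j * x j) = (\<Sum>j\<in>UNIV. A i' j * x j) / R i'"
    by (rule ratio_min_attained)
  ultimately show ?thesis
    using ratio_bounds_mult(2)[OF assms, where x=x and i=i] ratio_bounds_mult(1)[OF assms, where x=x and i=i']
    by (simp add: right_diff_distrib)
qed

lemma ratio_min_mult_ge: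
  fixes A :: "'a \<Rightarrow> 'a \<Rightarrow> real"
  assumes "0 \<le> c" "\<And>i j. c \<le> A i j"
    and "\<And>i. (\<Sum>j\<in>UNIV. A i j * R j) = \<mu> * R i"
  shows "(\<mu> - c) * ratio_min R x + c * (\<Sum>j\<in>UNIV. x j) \<le> ratio_min R (\<lambda>i. \<Sum>j\<in>UNIV. A i j * x j)"
  unfolding le_ratio_min_iff using ratio_bounds_mult(1)[OF assms] by (simp add: algebra_simps)

context
  fixes A :: "'a \<Rightarrow> 'a \<Rightarrow> real" and \<mu> :: real and y :: "nat \<Rightarrow> 'a \<Rightarrow> real"
  assumes A_ge_1: "\<And>i j. 1 \<le> A i j"
    and A_eig: "\<And>i. (\<Sum>j\<in>UNIV. A i j * R j) = \<mu> * R i"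
    and y_Suc: "\<And>n i. y (Suc n) i = (\<Sum>j\<in>UNIV. A i j * y n j)"
    and y_nonneg: "\<And>n i. 0 \<le> y n i"
begin

lemma eigenvalue_ge_1: "1 \<le> \<mu>"
  using le_eigenvalue[of 1 A] A_ge_1 A_eig by simp

lemma oscillation_iterate_le:
  "ratio_max R (y n) - ratio_min R (y n) \<le> (\<mu> - 1) ^ n * (ratio_max R (y 0) - ratio_min R (y 0))"
proof (induction n)
  case 0 then show ?case by simp
next
  case (Suc n)
  have "ratio_max R (y (Suc n)) - ratio_min R (y (Suc n)) \<le> (\<mu> - 1) * (ratio_max R (y n) - ratio_min R (y n))"
    using oscillation_mult_le[of 1 A \<mu> "y n"] A_ge_1 A_eig by (simp add: y_Suc[abs_def])
  also have "\<dots> \<le> (\<mu> - 1) * ((\<mu> - 1) ^ n * (ratio_max R (y 0) - ratio_min R (y 0)))"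
    using Suc.IH eigenvalue_ge_1 by (intro mult_left_mono) auto
  finally show ?case by (simp add: mult.assoc)
qed

lemma ratio_min_iterate_ge: "\<mu> ^ n * (\<Sum>j\<in>UNIV. y 0 j) \<le> ratio_min R (y (Suc n))"
proof (induction n)
  case 0
  have "(\<mu> - 1) * ratio_min R (y 0) + (\<Sum>j\<in>UNIV. y 0 j) \<le> ratio_min R (y 1)"
    using ratio_min_mult_ge[of 1 A \<mu> "y 0"] A_ge_1 A_eig by (simp add: y_Suc[abs_def])
  moreover have "0 \<le> (\<mu> - 1) * ratio_min R (y 0)"
    using eigenvalue_ge_1 ratio_min_nonneg[of "y 0"] y_nonneg by simp
  ultimately show ?case by simp
next
  case (Suc n)
  have "(\<mu> - 1) * ratio_min R (y (Suc n)) + (\<Sum>j\<in>UNIV. y (Suc n) j) \<le> ratio_min R (y (Suc (Suc n)))"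
    using ratio_min_mult_ge[of 1 A \<mu> "y (Suc n)"] A_ge_1 A_eig by (simp add: y_Suc[abs_def])
  moreover have "\<mu> * (\<mu> ^ n * (\<Sum>j\<in>UNIV. y 0 j)) \<le> \<mu> * ratio_min R (y (Suc n))"
    using Suc.IH eigenvalue_ge_1 by (intro mult_left_mono) auto
  ultimately show ?case
    using ratio_min_le_sum[of "y (Suc n)"] by (simp add: algebra_simps)
qed

lemma component_deviation_iterate_le:
  assumes y0_sum: "(\<Sum>j\<in>UNIV. y 0 j) = 1"
  shows "\<bar>y (Suc n) i - R i * (\<Sum>j\<in>UNIV. y (Suc n) j)\<bar>
    \<le> ((\<mu> - 1) / \<mu>) ^ n * (\<mu> * ratio_max R (y 0)) * (\<Sum>j\<in>UNIV. y (Suc n) j)"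
proof -
  define osc0 where "osc0 = ratio_max R (y 0) - ratio_min R (y 0)"
  have \<mu>: "1 \<le> \<mu>" by (rule eigenvalue_ge_1)
  have osc0: "0 \<le> osc0" "osc0 \<le> ratio_max R (y 0)"
    using ratio_min_nonneg[of "y 0"] y_nonneg ratio_min_le[of R "y 0" i] le_ratio_max[of "y 0" i R]
    unfolding osc0_def by fastforce+
  have "\<bar>y (Suc n) i - R i * (\<Sum>j\<in>UNIV. y (Suc n) j)\<bar> \<le> (\<mu> - 1) ^ Suc n * osc0"
    using abs_component_deviation_le oscillation_iterate_le unfolding osc0_def by (rule order_trans)
  also have "\<dots> = ((\<mu> - 1) / \<mu>) ^ n * ((\<mu> - 1) * osc0) * \<mu> ^ n"
    using \<mu> by (simp add: power_divide field_simps)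
  also have "\<dots> \<le> ((\<mu> - 1) / \<mu>) ^ n * (\<mu> * ratio_max R (y 0)) * (\<Sum>j\<in>UNIV. y (Suc n) j)"
  proof (rule mult_mono)
    show "((\<mu> - 1) / \<mu>) ^ n * ((\<mu> - 1) * osc0) \<le> ((\<mu> - 1) / \<mu>) ^ n * (\<mu> * ratio_max R (y 0))"
      using \<mu> osc0 by (intro mult_left_mono mult_mono) auto
    show "\<mu> ^ n \<le> (\<Sum>j\<in>UNIV. y (Suc n) j)"
      using ratio_min_iterate_ge[of n] ratio_min_le_sum[of "y (Suc n)"] y0_sum by simp
  qed (use \<mu> osc0 in auto)
  finally show ?thesis .
qed

end

end

section \<open>Letter frequencies\<close>

definition freq_within :: "('a \<Rightarrow> real) \<Rightarrow> real \<Rightarrow> 'a list \<Rightarrow> bool" where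
  "freq_within R \<eta> u \<longleftrightarrow>
     (\<forall>i. \<bar>real (count_list u i) - R i * real (length u)\<bar> \<le> \<eta> * real (length u))"

lemma freq_within_concat:
  "(\<And>x. x \<in> set xs \<Longrightarrow> freq_within R \<eta> x) \<Longrightarrow> freq_within R \<eta> (concat xs)"
proof (induction xs)
  case Nil then show ?case by (simp add: freq_within_def)
next
  case (Cons x xs)
  then have "freq_within R \<eta> x" "freq_within R \<eta> (concat xs)" by simp_all
  show ?case unfolding freq_within_def
  proof
    fix i
    have "\<bar>real (count_list x i) - R i * real (length x)\<bar> \<le> \<eta> * real (length x)"
      "\<bar>real (count_list (concat xs) i) - R i * real (length (concat xs))\<bar> \<le> \<eta> * real (length (concat xs))"
      using \<open>freq_within R \<eta> x\<close> \<open>freq_within R \<eta> (concat xs)\<close> unfolding freq_within_def by blast+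
    then show "\<bar>real (count_list (concat (x # xs)) i) - R i * real (length (concat (x # xs)))\<bar>
      \<le> \<eta> * real (length (concat (x # xs)))"
      by (simp add: abs_le_iff algebra_simps)
  qed
qed

lemma freq_within_mono: "freq_within R \<eta> u \<Longrightarrow> \<eta> \<le> \<eta>' \<Longrightarrow> freq_within R \<eta>' u"
  unfolding freq_within_def by (meson mult_right_mono of_nat_0_le_iff order_trans)

lemma prefix_of_concat_blocks:
  "u @ t = concat ws \<Longrightarrow> (\<forall>x\<in>set ws. length x \<le> B) \<Longrightarrow>
   \<exists>ws' p. u = concat ws' @ p \<and> set ws' \<subseteq> set ws \<and> length p \<le> B"
proof (induction ws arbitrary: u)
  case Nil then show ?case by simp
next
  case (Cons x ws)
  from Cons.prems(1) obtain us where
    "(u = x @ us \<and> us @ t = concat ws) \<or> (u @ us = x \<and> t = us @ concat ws)"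
    by (auto simp: append_eq_append_conv2)
  then show ?case
  proof
    assume a: "u = x @ us \<and> us @ t = concat ws"
    then obtain ws' p where "us = concat ws' @ p" "set ws' \<subseteq> set ws" "length p \<le> B"
      using Cons.IH[of us] Cons.prems(2) by auto
    then show ?case using a by (intro exI[of _ "x # ws'"] exI[of _ p]) auto
  next
    assume "u @ us = x \<and> t = us @ concat ws"
    then have "length u \<le> B" using Cons.prems(2) by auto
    then show ?case by (intro exI[of _ "[]"] exI[of _ u]) auto
  qed
qed

lemma factor_of_concat_blocks:
  "s @ u @ t = concat ws \<Longrightarrow> (\<forall>x\<in>set ws. length x \<le> B) \<Longrightarrow>
   \<exists>s' ws' p. u = s' @ concat ws' @ p \<and> set ws' \<subseteq> set ws \<and> length s' \<le> B \<and> length p \<le> B"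
proof (induction ws arbitrary: s)
  case Nil then show ?case by simp
next
  case (Cons x ws)
  from Cons.prems(1) obtain us where
    "(s = x @ us \<and> us @ u @ t = concat ws) \<or> (s @ us = x \<and> u @ t = us @ concat ws)"
    by (auto simp: append_eq_append_conv2)
  then show ?case
  proof
    assume "s = x @ us \<and> us @ u @ t = concat ws"
    then obtain s' ws' p where "u = s' @ concat ws' @ p" "set ws' \<subseteq> set ws" "length s' \<le> B" "length p \<le> B"
      using Cons.IH[of us] Cons.prems(2) by auto
    then show ?case by (intro exI[of _ s'] exI[of _ ws'] exI[of _ p]) auto
  next
    assume a: "s @ us = x \<and> u @ t = us @ concat ws"
    then have us: "length us \<le> B" using Cons.prems(2) by auto
    from a obtain vs where "(u = us @ vs \<and> vs @ t = concat ws) \<or> (u @ vs = us \<and> t = vs @ concat ws)"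
      by (auto simp: append_eq_append_conv2)
    then show ?case
    proof
      assume b: "u = us @ vs \<and> vs @ t = concat ws"
      then obtain ws' p where "vs = concat ws' @ p" "set ws' \<subseteq> set ws" "length p \<le> B"
        using prefix_of_concat_blocks[of vs t ws B] Cons.prems(2) by auto
      then show ?case using b us by (intro exI[of _ us] exI[of _ ws'] exI[of _ p]) auto
    next
      assume "u @ vs = us \<and> t = vs @ concat ws"
      then have "length u \<le> B" using us by auto
      then show ?case by (intro exI[of _ u] exI[of _ "[]"] exI[of _ "[]"]) auto
    qed
  qed
qed

context positive_prob_vector
begin

lemma freq_within_1: "freq_within R 1 x"
  unfolding freq_within_def
proof
  fix i
  have "real (count_list x i) \<le> real (length x)" by (simp add: count_le_length)
  moreover have "0 \<le> R i * real (length x)" "R i * real (length x) \<le> real (length x)"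
    using R_pos[of i] R_le_1[of i] by (auto intro: mult_left_le_one_le)
  ultimately show "\<bar>real (count_list x i) - R i * real (length x)\<bar> \<le> 1 * real (length x)"
    by linarith
qed

lemma freq_within_pad:
  assumes v: "freq_within R \<eta> v" and "0 \<le> \<eta>"
    and "length s \<le> B" "length p \<le> B" "2 * real B \<le> \<eta> * real (length (s @ v @ p))"
  shows "freq_within R (2 * \<eta>) (s @ v @ p)"
  unfolding freq_within_def
proof
  fix i
  have "\<bar>real (count_list v i) - R i * real (length v)\<bar> \<le> \<eta> * real (length v)"
    "\<bar>real (count_list s i) - R i * real (length s)\<bar> \<le> real (length s)"
    "\<bar>real (count_list p i) - R i * real (length p)\<bar> \<le> real (length p)"
    using v freq_within_1[of s] freq_within_1[of p] unfolding freq_within_def by auto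
  moreover have "\<eta> * real (length v) \<le> \<eta> * real (length (s @ v @ p))"
    using \<open>0 \<le> \<eta>\<close> by (intro mult_left_mono) auto
  ultimately show "\<bar>real (count_list (s @ v @ p) i) - R i * real (length (s @ v @ p))\<bar>
    \<le> 2 * \<eta> * real (length (s @ v @ p))"
    using assms(3-5) by (simp add: abs_le_iff algebra_simps)
qed

end

locale primitive_subst = semi_compatible_subst th + positive_prob_vector R
  for th :: "'a::finite \<Rightarrow> 'a list set" and R :: "'a \<Rightarrow> real" +
  fixes lam :: real
  assumes primitive: "primitive_mat (subst_matrix th)"
    and R_eigen: "\<And>i. (\<Sum>j\<in>UNIV. real (subst_matrix th i j) * R j) = lam * R i"
begin

lemma one_le_eigenvalue_power:
  assumes pos: "\<And>i j. 0 < mat_pow M k i j"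
  shows "1 \<le> lam ^ k"
  using le_eigenvalue[of 1 "\<lambda>i j. real (mat_pow M k i j)" "lam ^ k"] pos
    mat_pow_eigenvector[OF R_eigen] by (simp add: Suc_le_eq)

lemma level_words_freq_within:
  assumes pos: "\<And>i j. 0 < mat_pow M k i j" and w: "w \<in> subst_pow th (Suc n * k) a"
  defines "\<mu> \<equiv> lam ^ k"
  shows "freq_within R (((\<mu> - 1) / \<mu>) ^ n * (\<mu> * (\<Sum>i\<in>UNIV. 1 / R i))) w"
proof -
  define A where "A i j = real (mat_pow M k i j)" for i j
  define y where "y m i = real (mat_pow M (m * k) i a)" for m i
  have A_ge_1: "1 \<le> A i j" for i j
    using pos[of i j] unfolding A_def by linarith
  have A_eig: "(\<Sum>j\<in>UNIV. A i j * R j) = \<mu> * R i" for i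
    unfolding A_def \<mu>_def by (rule mat_pow_eigenvector[OF R_eigen])
  have y_Suc: "y (Suc m) i = (\<Sum>j\<in>UNIV. A i j * y m j)" for m i
    using mat_pow_add[of M k "m * k" i a] unfolding y_def A_def by (simp add: add.commute)
  have y_nonneg: "0 \<le> y m i" for m i
    unfolding y_def by simp
  have y0_sum: "(\<Sum>j\<in>UNIV. y 0 j) = 1"
    unfolding y_def by (simp add: if_distrib[where f=real] cong: if_cong)
  have count_eq: "real (count_list w i) = y (Suc n) i" for i
    unfolding y_def using count_list_subst_pow[OF w] by simp
  have length_eq: "real (length w) = (\<Sum>j\<in>UNIV. y (Suc n) j)"
    unfolding y_def using length_subst_pow[OF w] by simp
  have "freq_within R (((\<mu> - 1) / \<mu>) ^ n * (\<mu> * ratio_max R (y 0))) w"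
    unfolding freq_within_def count_eq length_eq
    using component_deviation_iterate_le[OF A_ge_1 A_eig y_Suc y_nonneg y0_sum] by blast
  moreover have "ratio_max R (y 0) \<le> (\<Sum>i\<in>UNIV. 1 / R i)"
    unfolding ratio_max_le_iff y_def using R_pos
    by (auto intro: member_le_sum sum_nonneg simp: less_imp_le)
  then have "((\<mu> - 1) / \<mu>) ^ n * (\<mu> * ratio_max R (y 0)) \<le> ((\<mu> - 1) / \<mu>) ^ n * (\<mu> * (\<Sum>i\<in>UNIV. 1 / R i))"
    using one_le_eigenvalue_power[OF pos] unfolding \<mu>_def by (intro mult_left_mono) auto
  ultimately show ?thesis
    by (rule freq_within_mono)
qed

lemma blocks_freq_within:
  assumes "0 < \<eta>"
  obtains k where "\<And>a w. w \<in> subst_pow th k a \<Longrightarrow> freq_within R \<eta> w"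
proof -
  obtain k where pos: "\<And>i j. 0 < mat_pow M k i j"
    using primitive unfolding primitive_mat_def by blast
  define \<mu> where "\<mu> = lam ^ k"
  define C where "C = (\<Sum>i\<in>UNIV. 1 / R i)"
  have \<mu>: "1 \<le> \<mu>"
    unfolding \<mu>_def by (rule one_le_eigenvalue_power[OF pos])
  have "0 < C"
    unfolding C_def using R_pos by (intro sum_pos) auto
  with \<mu> \<open>0 < \<eta>\<close> have "0 < \<eta> / (\<mu> * C)" by simp
  moreover have "(\<mu> - 1) / \<mu> < 1" using \<mu> by simp
  ultimately obtain n where "((\<mu> - 1) / \<mu>) ^ n < \<eta> / (\<mu> * C)"
    using real_arch_pow_inv by blast
  then have "((\<mu> - 1) / \<mu>) ^ n * (\<mu> * C) \<le> \<eta>"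
    using \<mu> \<open>0 < C\<close> by (simp add: pos_less_divide_eq less_imp_le)
  then show thesis
    using level_words_freq_within[OF pos] freq_within_mono
    unfolding \<mu>_def C_def by (intro that[of "Suc n * k"]) blast
qed

end

section \<open>The language\<close>

lemma mem_subst_langI:
  "w \<in> subst_pow th m a \<Longrightarrow> w = p @ v @ s \<Longrightarrow> v \<noteq> [] \<Longrightarrow> v \<in> subst_lang th"
  unfolding subst_lang_def by blast

lemma finite_lang_len: "finite (lang_len th m :: 'a::finite list set)"
proof (rule finite_subset)
  show "lang_len th m \<subseteq> {xs. set xs \<subseteq> UNIV \<and> length xs = m}"
    unfolding lang_len_def by auto
qed (rule finite_lists_length_eq, simp)

lemma card_lang_len_mono:
  assumes ext: "\<And>u. u \<in> subst_lang th \<Longrightarrow> \<exists>c. u @ [c] \<in> subst_lang th" and "m \<le> m'"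
  shows "card (lang_len th m :: 'a::finite list set) \<le> card (lang_len th m')"
proof -
  have "lang_len th m \<subseteq> take m ` lang_len th m'"
    using \<open>m \<le> m'\<close>
  proof (induction m' rule: dec_induct)
    case base
    show ?case unfolding lang_len_def by (auto intro: image_eqI[of _ _ _ ] simp: image_iff)
  next
    case (step k)
    show ?case
    proof
      fix u assume "u \<in> lang_len th m"
      then obtain v where v: "v \<in> lang_len th k" "u = take m v" using step.IH by blast
      then obtain c where "v @ [c] \<in> subst_lang th" using ext unfolding lang_len_def by blast
      then have "v @ [c] \<in> lang_len th (Suc k)" using v(1) unfolding lang_len_def by simp
      moreover have "u = take m (v @ [c])" using v step.hyps unfolding lang_len_def by simp
      ultimately show "u \<in> take m ` lang_len th (Suc k)" by blast
    qed
  qed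
  then have "card (lang_len th m) \<le> card (take m ` lang_len th m')"
    by (intro card_mono finite_imageI finite_lang_len)
  also have "\<dots> \<le> card (lang_len th m')"
    by (intro card_image_le finite_lang_len)
  finally show ?thesis .
qed

lemma card_lang_lengths_le:
  assumes ext: "\<And>u. u \<in> subst_lang th \<Longrightarrow> \<exists>c. u @ [c] \<in> subst_lang th"
    and le: "\<And>m. m \<in> S \<Longrightarrow> m \<le> m'" and W: "W \<subseteq> {u \<in> subst_lang th. length u \<in> S}"
  shows "finite W" "card W \<le> card S * card (lang_len th m' :: 'a::finite list set)"
proof -
  have "S \<subseteq> {..m'}" using le by blast
  then have "finite S" by (rule finite_subset) simp
  have W_sub: "W \<subseteq> (\<Union>m\<in>S. lang_len th m)"
    using W unfolding lang_len_def by auto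
  then show "finite W"
    by (rule finite_subset[OF _ finite_UN_I[OF \<open>finite S\<close> finite_lang_len]])
  have "card W \<le> card (\<Union>m\<in>S. lang_len th m)"
    by (rule card_mono[OF finite_UN_I[OF \<open>finite S\<close> finite_lang_len] W_sub])
  also have "\<dots> \<le> (\<Sum>m\<in>S. card (lang_len th m))"
    by (rule card_UN_le[OF \<open>finite S\<close>])
  also have "\<dots> \<le> (\<Sum>m\<in>S. card (lang_len th m'))"
    by (intro sum_mono card_lang_len_mono[OF ext le])
  finally show "card W \<le> card S * card (lang_len th m')" by simp
qed

context semi_compatible_subst
begin

lemma lang_len_empty_if_K_eq_1:
  assumes "K = 1" and "2 \<le> N"
  shows "lang_len th N = {}"
proof -
  have "length u \<le> 1" if u: "u \<in> subst_lang th" for u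
  proof -
    obtain a m w s t where "w \<in> subst_pow th m a" "w = s @ u @ t"
      using u unfolding subst_lang_def by blast
    then show ?thesis using length_subst_pow_le[of w m a] \<open>K = 1\<close> by simp
  qed
  then show ?thesis using \<open>2 \<le> N\<close> unfolding lang_len_def by fastforce
qed

end

context primitive_subst
begin

lemma long_words_freq_within:
  assumes "0 < \<eta>"
  obtains m0 where "\<And>u. u \<in> subst_lang th \<Longrightarrow> m0 \<le> length u \<Longrightarrow> freq_within R \<eta> u"
proof -
  obtain k where k: "\<And>a w. w \<in> subst_pow th k a \<Longrightarrow> freq_within R (\<eta> / 2) w"
    using blocks_freq_within[of "\<eta> / 2"] assms by auto
  define B where "B = K ^ k"
  show thesis
  proof (rule that[of "Suc B + nat \<lceil>4 * real B / \<eta>\<rceil>"])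
    fix u assume u: "u \<in> subst_lang th" and long: "Suc B + nat \<lceil>4 * real B / \<eta>\<rceil> \<le> length u"
    then obtain a m w s t where w: "w \<in> subst_pow th m a" "w = s @ u @ t"
      unfolding subst_lang_def by blast
    have "k \<le> m"
    proof (rule ccontr)
      assume "\<not> k \<le> m"
      then have "K ^ m \<le> B" unfolding B_def using K_pos by (intro power_increasing) auto
      moreover have "length u \<le> K ^ m" using length_subst_pow_le[OF w(1)] w(2) by simp
      ultimately show False using long by simp
    qed
    then obtain w' vs where vs: "list_all2 (\<lambda>v c. v \<in> subst_pow th k c) vs w'" "w = concat vs"
      using w(1) mem_subst_pow_add_iff[of w th "m - k" k a] by auto
    have blocks: "\<exists>c. x \<in> subst_pow th k c" if "x \<in> set vs" for x
      using vs(1) that by (auto simp: list_all2_conv_all_nth in_set_conv_nth)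
    then have "\<forall>x\<in>set vs. length x \<le> B"
      unfolding B_def using length_subst_pow_le by blast
    then obtain s' vs' p where u_eq: "u = s' @ concat vs' @ p" "set vs' \<subseteq> set vs"
      and "length s' \<le> B" "length p \<le> B"
      using factor_of_concat_blocks[of s u t vs B] w(2) vs(2) by auto
    have "freq_within R (\<eta> / 2) (concat vs')"
      using u_eq(2) blocks k by (intro freq_within_concat) blast
    moreover have "4 * real B \<le> \<eta> * real (length u)"
    proof -
      have "4 * real B / \<eta> \<le> real (length u)"
        using real_nat_ceiling_ge[of "4 * real B / \<eta>"] long by linarith
      then show ?thesis using \<open>0 < \<eta>\<close> by (simp add: pos_divide_le_eq mult.commute)
    qed
    ultimately have "freq_within R (2 * (\<eta> / 2)) u"
      unfolding u_eq(1) using \<open>length s' \<le> B\<close> \<open>length p \<le> B\<close> \<open>0 < \<eta>\<close>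
      by (intro freq_within_pad) (auto simp flip: u_eq(1))
    then show "freq_within R \<eta> u" by simp
  qed
qed

lemma letters_occur:
  obtains k where "\<And>a c w. w \<in> subst_pow th k c \<Longrightarrow> a \<in> set w"
proof -
  obtain k where pos: "\<And>i j. 0 < mat_pow M k i j"
    using primitive unfolding primitive_mat_def by blast
  have "a \<in> set w" if "w \<in> subst_pow th k c" for a c w
    using count_list_subst_pow[OF that, of a] pos[of a c] count_notin by fastforce
  then show thesis using that by blast
qed

lemma letter_not_last:
  assumes "2 \<le> K"
  obtains n b x d z where "x @ a # d # z \<in> subst_pow th n b"
proof -
  obtain k where occ: "\<And>a c w. w \<in> subst_pow th k c \<Longrightarrow> a \<in> set w"
    using letters_occur by blast
  have "K \<in> range ell" by (rule Max_in) auto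
  then obtain b where "ell b = K" by (metis rangeE)
  obtain w0 where "w0 \<in> th b"
    using subst_nonempty by blast
  with \<open>ell b = K\<close> assms have "2 \<le> length w0"
    by (simp add: length_subst_letter)
  then obtain c0 c1 r where w0_eq: "w0 = c0 # c1 # r"
    by (cases w0; cases "tl w0") auto
  obtain x y where xy: "level_word k c0 = x @ a # y"
    using occ[OF level_word_mem] by (meson split_list)
  obtain d z where dz: "y @ concat (map (level_word k) (c1 # r)) = d # z"
    using subst_pow_not_Nil[OF level_word_mem[of k c1]]
    by (cases "y @ concat (map (level_word k) (c1 # r))") auto
  have "w0 \<in> subst_pow th 1 b"
    using \<open>w0 \<in> th b\<close> by (simp add: subst_set_def)
  then have "concat (map (level_word k) w0) \<in> subst_pow th (1 + k) b"
    using list_all2_level_word unfolding mem_subst_pow_add_iff by blast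
  moreover have "concat (map (level_word k) w0) = x @ a # d # z"
    using xy dz w0_eq by simp
  ultimately have "x @ a # d # z \<in> subst_pow th (1 + k) b"
    by (simp only:)
  then show thesis by (rule that)
qed

lemma subst_lang_extendable:
  assumes "2 \<le> K" and "u \<in> subst_lang th"
  shows "\<exists>c. u @ [c] \<in> subst_lang th"
proof -
  obtain a m w s t where w: "w \<in> subst_pow th m a" "w = s @ u @ t" "u \<noteq> []"
    using assms(2) unfolding subst_lang_def by blast
  show ?thesis
  proof (cases t)
    case (Cons e t')
    then have "w = s @ (u @ [e]) @ t'" using w(2) by simp
    from mem_subst_langI[OF w(1) this] show ?thesis by auto
  next
    case Nil
    (* Substitute w for an occurrence of a that is followed by some letter d. *)
    obtain n b x d z where xz: "x @ a # d # z \<in> subst_pow th n b"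
      by (rule letter_not_last[OF assms(1)])
    obtain e t' where et: "level_word m d = e # t'"
      using subst_pow_not_Nil[OF level_word_mem] by (cases "level_word m d") auto
    define vs where "vs = map (level_word m) x @ [w] @ map (level_word m) (d # z)"
    have "list_all2 (\<lambda>v c. v \<in> subst_pow th m c) vs (x @ [a] @ d # z)"
      unfolding vs_def using w(1) by (intro list_all2_appendI list_all2_level_word) simp
    then have vs_mem: "concat vs \<in> subst_pow th (n + m) b"
      using xz unfolding mem_subst_pow_add_iff by auto
    have "concat vs = (concat (map (level_word m) x) @ s) @ (u @ [e]) @ (t' @ concat (map (level_word m) z))"
      unfolding vs_def using w(2) Nil et by simp
    from mem_subst_langI[OF vs_mem this] show ?thesis by auto
  qed
qed

end

section \<open>Counting inflated words\<close>

lemma card_nat_interval_le: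
  fixes a b :: real
  assumes "0 \<le> a" "a \<le> b"
  shows "real (card {m::nat. a \<le> real m \<and> real m \<le> b}) \<le> b - a + 1"
proof -
  have "{m::nat. a \<le> real m \<and> real m \<le> b} \<subseteq> {nat \<lceil>a\<rceil>..nat \<lfloor>b\<rfloor>}"
    by (auto simp: nat_le_iff le_nat_iff ceiling_le_iff le_floor_iff)
  then have "card {m::nat. a \<le> real m \<and> real m \<le> b} \<le> Suc (nat \<lfloor>b\<rfloor>) - nat \<lceil>a\<rceil>"
    using card_mono[of "{nat \<lceil>a\<rceil>..nat \<lfloor>b\<rfloor>}"] by fastforce
  moreover have "real (Suc (nat \<lfloor>b\<rfloor>) - nat \<lceil>a\<rceil>) \<le> b - a + 1"
  proof (cases "nat \<lceil>a\<rceil> \<le> Suc (nat \<lfloor>b\<rfloor>)")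
    case True
    have "real (nat \<lfloor>b\<rfloor>) \<le> b" using assms by simp
    with True real_nat_ceiling_ge[of a] show ?thesis by (simp add: of_nat_diff)
  next
    case False
    then have "Suc (nat \<lfloor>b\<rfloor>) - nat \<lceil>a\<rceil> = 0" by arith
    with assms show ?thesis by simp
  qed
  ultimately show ?thesis by linarith
qed

lemma card_scaled_nat_interval_le:
  fixes a a' b' b :: real
  assumes "0 < a" "a < a'" "a' \<le> b'" "b' < b"
  obtains N0 where "\<And>N. N0 \<le> N \<Longrightarrow>
    real (card {m::nat. a' * real m \<le> real N \<and> real N \<le> b' * real m}) \<le> real N * (1 / a - 1 / b)"
proof
  define d where "d = (1 / a - 1 / a') + (1 / b' - 1 / b)"
  have "1 / a' < 1 / a" "1 / b < 1 / b'"
    using assms by (auto intro: frac_less2)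
  then have "0 < d" unfolding d_def by simp
  fix N :: nat assume "nat \<lceil>1 / d\<rceil> \<le> N"
  then have "1 \<le> real N * d"
    using \<open>0 < d\<close> real_nat_ceiling_ge[of "1 / d"] by (simp add: divide_le_eq mult.commute)
  have "{m::nat. a' * real m \<le> real N \<and> real N \<le> b' * real m}
      = {m::nat. real N / b' \<le> real m \<and> real m \<le> real N / a'}"
    using assms by (auto simp: field_simps)
  moreover have "real N / b' \<le> real N / a'"
    using assms by (simp add: frac_le)
  ultimately have "real (card {m::nat. a' * real m \<le> real N \<and> real N \<le> b' * real m})
      \<le> real N / a' - real N / b' + 1"
    using assms card_nat_interval_le[of "real N / b'" "real N / a'"] by simp
  also have "\<dots> = real N * (1 / a - 1 / b) - real N * d + 1"
    unfolding d_def by (simp add: algebra_simps)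
  finally show "real (card {m::nat. a' * real m \<le> real N \<and> real N \<le> b' * real m}) \<le> real N * (1 / a - 1 / b)"
    using \<open>1 \<le> real N * d\<close> by linarith
qed

context primitive_subst
begin

lemma eigenvalue_eq_sum_subst_len: "lam = (\<Sum>j\<in>UNIV. R j * real (ell j))"
proof -
  have "(\<Sum>j\<in>UNIV. R j * real (ell j)) = (\<Sum>j\<in>UNIV. \<Sum>i\<in>UNIV. real (M i j) * R j)"
    by (simp add: subst_len_eq_sum sum_distrib_left mult.commute)
  also have "\<dots> = (\<Sum>i\<in>UNIV. \<Sum>j\<in>UNIV. real (M i j) * R j)"
    by (rule sum.swap)
  also have "\<dots> = lam"
    by (simp add: R_eigen R_sum flip: sum_distrib_left)
  finally show ?thesis ..
qed

lemma length_subst_word_deviation: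
  assumes u: "freq_within R \<eta> u" and v: "v \<in> subst_word th u"
  shows "\<bar>real (length v) - lam * real (length u)\<bar> \<le> \<eta> * nK * real (length u)"
proof -
  have "real (length v) - lam * real (length u)
      = (\<Sum>j\<in>UNIV. (real (count_list u j) - R j * real (length u)) * real (ell j))"
    by (simp add: length_subst_word[OF v] eigenvalue_eq_sum_subst_len sum_distrib_right
        left_diff_distrib right_diff_distrib sum_subtractf sum_distrib_left mult_ac)
  also have "\<bar>\<dots>\<bar> \<le> (\<Sum>j\<in>(UNIV::'a set). \<eta> * real (length u) * real K)"
  proof (rule order_trans[OF sum_abs sum_mono])
    fix j
    have "\<bar>real (count_list u j) - R j * real (length u)\<bar> \<le> \<eta> * real (length u)"
      using u unfolding freq_within_def by blast
    moreover have "real (ell j) \<le> real K" by (simp add: subst_len_le_K)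
    ultimately show "\<bar>(real (count_list u j) - R j * real (length u)) * real (ell j)\<bar> \<le> \<eta> * real (length u) * real K"
      by (simp add: abs_mult mult_mono)
  qed
  finally show ?thesis by (simp add: mult_ac)
qed

lemma card_subst_word_le_powr:
  assumes u: "freq_within R \<eta> u" and "0 \<le> \<eta>" and T: "real (length u) \<le> T"
  shows "real (card (subst_word th u)) \<le> (\<Prod>i\<in>UNIV. real (card (th i)) powr ((R i + \<eta>) * T))"
proof -
  have "real (card (subst_word th u)) \<le> (\<Prod>i\<in>UNIV. real (card (th i)) ^ count_list u i)"
    using card_subst_word_le[of u] by (simp flip: of_nat_power of_nat_prod)
  also have "\<dots> \<le> (\<Prod>i\<in>UNIV. real (card (th i)) powr ((R i + \<eta>) * T))"
  proof (rule prod_mono)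
    fix i
    have card: "1 \<le> real (card (th i))"
      using subst_nonempty[of i] by (simp add: Suc_le_eq card_gt_0_iff)
    have "real (count_list u i) \<le> (R i + \<eta>) * real (length u)"
      using u unfolding freq_within_def by (simp add: abs_le_iff algebra_simps)
    also have "\<dots> \<le> (R i + \<eta>) * T"
      using T R_pos[of i] \<open>0 \<le> \<eta>\<close> by (intro mult_left_mono) auto
    finally have "real (card (th i)) powr real (count_list u i) \<le> real (card (th i)) powr ((R i + \<eta>) * T)"
      using card by (rule powr_mono)
    then show "0 \<le> real (card (th i)) ^ count_list u i \<and>
        real (card (th i)) ^ count_list u i \<le> real (card (th i)) powr ((R i + \<eta>) * T)"
      using card by (simp add: powr_realpow)
  qed
  finally show ?thesis .
qed

lemma subst_lang_len_cover:
  assumes m0: "\<And>u. u \<in> subst_lang th \<Longrightarrow> m0 \<le> length u \<Longrightarrow> freq_within R \<eta> u"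
    and "K * m0 \<le> N"
  shows "subst_set th (subst_lang th) \<inter> lang_len th N \<subseteq>
    (\<Union>u \<in> {u \<in> subst_lang th. m0 \<le> length u \<and>
        (lam - \<eta> * nK) * real (length u) \<le> real N \<and> real N \<le> (lam + \<eta> * nK) * real (length u)}.
      subst_word th u)"
proof
  fix v assume "v \<in> subst_set th (subst_lang th) \<inter> lang_len th N"
  then obtain u where u: "u \<in> subst_lang th" "v \<in> subst_word th u" and "length v = N"
    unfolding subst_set_def lang_len_def by blast
  have "K * m0 \<le> K * length u"
    using \<open>K * m0 \<le> N\<close> length_subst_word_le[OF u(2)] \<open>length v = N\<close> by linarith
  then have "m0 \<le> length u" using K_pos by simp
  then have "\<bar>real N - lam * real (length u)\<bar> \<le> \<eta> * nK * real (length u)"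
    using length_subst_word_deviation[OF m0[OF u(1)] u(2)] \<open>length v = N\<close> by simp
  then have "(lam - \<eta> * nK) * real (length u) \<le> real N \<and> real N \<le> (lam + \<eta> * nK) * real (length u)"
    by (simp add: abs_le_iff algebra_simps)
  with u \<open>m0 \<le> length u\<close> show "v \<in> (\<Union>u \<in> {u \<in> subst_lang th. m0 \<le> length u \<and>
        (lam - \<eta> * nK) * real (length u) \<le> real N \<and> real N \<le> (lam + \<eta> * nK) * real (length u)}.
      subst_word th u)"
    by blast
qed

lemma card_subst_lang_len_le_lengths:
  assumes ext: "\<And>u. u \<in> subst_lang th \<Longrightarrow> \<exists>c. u @ [c] \<in> subst_lang th"
    and m0: "\<And>u. u \<in> subst_lang th \<Longrightarrow> m0 \<le> length u \<Longrightarrow> freq_within R \<eta> u"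
    and "0 \<le> \<eta>" "\<eta> \<le> \<epsilon>" "K * m0 \<le> N" and lm: "0 < lm" "lm \<le> lam - \<eta> * nK"
  shows "real (card (subst_set th (subst_lang th) \<inter> lang_len th N))
    \<le> real (card {m::nat. (lam - \<eta> * nK) * real m \<le> real N \<and> real N \<le> (lam + \<eta> * nK) * real m})
      * real (card (lang_len th (nat \<lfloor>real N / lm\<rfloor>)))
      * (\<Prod>i\<in>UNIV. real (card (th i)) powr ((R i + \<epsilon>) * real N / lm))"
    (is "_ \<le> real (card ?S) * real (card (lang_len th ?Mx)) * ?P")
proof -
  define Src where "Src = {u \<in> subst_lang th. m0 \<le> length u \<and> length u \<in> ?S}"
  have short: "real m \<le> real N / lm" if "m \<in> ?S" for m
  proof -
    have "lm * real m \<le> (lam - \<eta> * nK) * real m"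
      using lm by (intro mult_right_mono) auto
    also have "\<dots> \<le> real N" using that by simp
    finally show ?thesis using lm by (simp add: le_divide_eq mult.commute)
  qed
  have "m \<le> ?Mx" if "m \<in> ?S" for m
    using short[OF that] by (simp add: le_nat_floor)
  moreover have "Src \<subseteq> {u \<in> subst_lang th. length u \<in> ?S}"
    unfolding Src_def by blast
  ultimately have "finite Src" and card_Src: "card Src \<le> card ?S * card (lang_len th ?Mx)"
    using card_lang_lengths_le[OF ext] by blast+
  have "card (subst_set th (subst_lang th) \<inter> lang_len th N) \<le> card (\<Union>u\<in>Src. subst_word th u)"
    using subst_lang_len_cover[of m0 \<eta> N, OF m0 \<open>K * m0 \<le> N\<close>] \<open>finite Src\<close> card_subst_word_le
    unfolding Src_def by (intro card_mono finite_UN_I) auto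
  also have "\<dots> \<le> (\<Sum>u\<in>Src. card (subst_word th u))"
    using \<open>finite Src\<close> by (rule card_UN_le)
  finally have "real (card (subst_set th (subst_lang th) \<inter> lang_len th N))
      \<le> (\<Sum>u\<in>Src. real (card (subst_word th u)))"
    by (simp flip: of_nat_sum)
  also have "\<dots> \<le> (\<Sum>u\<in>Src. ?P)"
  proof (rule sum_mono)
    fix u assume "u \<in> Src"
    then have "freq_within R \<eta> u"
      using m0 unfolding Src_def by blast
    then have "freq_within R \<epsilon> u"
      using \<open>\<eta> \<le> \<epsilon>\<close> by (rule freq_within_mono)
    moreover have "real (length u) \<le> real N / lm"
      using short \<open>u \<in> Src\<close> unfolding Src_def by blast
    ultimately have "real (card (subst_word th u))
        \<le> (\<Prod>i\<in>UNIV. real (card (th i)) powr ((R i + \<epsilon>) * (real N / lm)))"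
      using \<open>0 \<le> \<eta>\<close> \<open>\<eta> \<le> \<epsilon>\<close> by (intro card_subst_word_le_powr) auto
    then show "real (card (subst_word th u)) \<le> ?P" by simp
  qed
  also have "\<dots> \<le> real (card ?S) * real (card (lang_len th ?Mx)) * ?P"
    using card_Src by (simp add: mult_right_mono prod_nonneg flip: of_nat_mult)
  finally show ?thesis .
qed

lemma card_subst_lang_len_le:
  assumes "0 < \<epsilon>" and lam_gt: "\<epsilon> * real (card (UNIV :: 'a set)) * real K < lam"
  defines "lm \<equiv> lam - \<epsilon> * real (card (UNIV :: 'a set)) * real K"
    and "lp \<equiv> lam + \<epsilon> * real (card (UNIV :: 'a set)) * real K"
  shows "\<exists>N0. \<forall>N\<ge>N0.
    real (card (subst_set th (subst_lang th) \<inter> lang_len th N))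
      \<le> real N * (1 / lm - 1 / lp) * real (card (lang_len th (nat \<lfloor>real N / lm\<rfloor>)))
        * (\<Prod>i\<in>UNIV. real (card (th i)) powr ((R i + \<epsilon>) * real N / lm))"
    (is "\<exists>N0. \<forall>N\<ge>N0. ?I N \<le> real N * (1 / lm - 1 / lp) * ?L N * ?P N")
proof -
  have lm_lp: "lm = lam - \<epsilon> * nK" "lp = lam + \<epsilon> * nK"
    unfolding lm_def lp_def by (simp_all add: mult.assoc)
  have lm: "0 < lm" "lm < lp"
    using lam_gt \<open>0 < \<epsilon>\<close> nK_pos unfolding lm_lp by (simp_all add: mult.assoc)
  show ?thesis
  proof (cases "K = 1")
    case True
    have "?I N \<le> real N * (1 / lm - 1 / lp) * ?L N * ?P N" if "2 \<le> N" for N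
      using lang_len_empty_if_K_eq_1[OF True that] lm
      by (simp add: frac_le mult_nonneg_nonneg prod_nonneg)
    then show ?thesis by blast
  next
    case False
    then have ext: "\<And>u. u \<in> subst_lang th \<Longrightarrow> \<exists>c. u @ [c] \<in> subst_lang th"
      using K_pos subst_lang_extendable by simp
    (* The gap between eps and eps / 2 pays for the + 1 in the number of admissible lengths. *)
    define \<eta> where "\<eta> = \<epsilon> / 2"
    obtain m0 where m0: "\<And>u. u \<in> subst_lang th \<Longrightarrow> m0 \<le> length u \<Longrightarrow> freq_within R \<eta> u"
      using long_words_freq_within[of \<eta>] \<open>0 < \<epsilon>\<close> unfolding \<eta>_def by auto
    have "lm < lam - \<eta> * nK" "lam - \<eta> * nK \<le> lam + \<eta> * nK" "lam + \<eta> * nK < lp"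
      using \<open>0 < \<epsilon>\<close> nK_pos unfolding lm_lp \<eta>_def by auto
    then obtain N1 where N1: "\<And>N. N1 \<le> N \<Longrightarrow>
        real (card {m::nat. (lam - \<eta> * nK) * real m \<le> real N \<and> real N \<le> (lam + \<eta> * nK) * real m})
        \<le> real N * (1 / lm - 1 / lp)"
      using card_scaled_nat_interval_le[OF lm(1)] by blast
    have "?I N \<le> real N * (1 / lm - 1 / lp) * ?L N * ?P N" if N: "max N1 (K * m0) \<le> N" for N
    proof -
      have "?I N \<le> real (card {m::nat. (lam - \<eta> * nK) * real m \<le> real N \<and> real N \<le> (lam + \<eta> * nK) * real m})
          * ?L N * ?P N"
        using \<open>0 < \<epsilon>\<close> N lm \<open>lm < lam - \<eta> * nK\<close> unfolding \<eta>_def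
        by (intro card_subst_lang_len_le_lengths[OF ext m0[unfolded \<eta>_def]]) auto
      also have "\<dots> \<le> real N * (1 / lm - 1 / lp) * ?L N * ?P N"
        using N1 N by (intro mult_right_mono prod_nonneg) auto
      finally show ?thesis .
    qed
    then show ?thesis by blast
  qed
qed

end

theorem mainTheorem6:
  fixes th :: "'a::finite \<Rightarrow> 'a list set"
    and lam :: real and R :: "'a \<Rightarrow> real"
  assumes rs: "random_subst th"
    and sc: "semi_compatible th"
    and prim: "primitive_mat (subst_matrix th)"
    and R_pos: "\<forall>i. R i > 0"
    and R_norm: "(\<Sum>i\<in>UNIV. R i) = 1"
    and R_eig: "\<forall>i. (\<Sum>j\<in>UNIV. real (subst_matrix th i j) * R j) = lam * R i"
  shows "\<forall>\<epsilon>>0. lam > \<epsilon> * real (card (UNIV::'a set)) * real (Max (range (subst_len th))) \<longrightarrow>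
     (\<exists>N0. \<forall>N\<ge>N0.
        let K = real (Max (range (subst_len th)));
            lm = lam - \<epsilon> * real (card (UNIV::'a set)) * K;
            lp = lam + \<epsilon> * real (card (UNIV::'a set)) * K
        in real (card (subst_set th (subst_lang th) \<inter> lang_len th N))
           \<le> real N * (1 / lm - 1 / lp)
             * real (card (lang_len th (nat \<lfloor>real N / lm\<rfloor>)))
             * (\<Prod>i\<in>UNIV. real (card (th i)) powr ((R i + \<epsilon>) * real N / lm)))"
proof -
  interpret primitive_subst th R lam
    using rs sc prim R_pos R_norm R_eig by unfold_locales auto
  show ?thesis
    unfolding Let_def using card_subst_lang_len_le by blast
qed

end
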